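(* Suppose: (a) $\lambda$ is a singular cardinal with $\kappa=\mathrm{cf}(\lambda)>\aleph_0$; (b) $f$ is a function from ${}^{\omega>}\lambda$ (finite sequences of ordinals $<\lambda$) to subsets of ${}^{\omega\ge}\lambda$ (sequences of length $\le\omega$ of ordinals $<\lambda$), each value of cardinality $<\kappa$; (c) $\lambda=\sum_{i<\kappa}\lambda_i$ with $\langle\lambda_i:i<\kappa\rangle$ strictly increasing and continuous; (d) $S\subseteq\{i<\kappa:\mathrm{cf}(i)=\aleph_0\}$ is stationary in $\kappa$; (e) for $i\in S$, $\lambda_i=\sum_{n<\omega}\lambda_{i,n}$ where $\kappa<\lambda_{i,0}$ and each $\lambda_{i,n}$ is a regular cardinal with $\lambda_{i,n}<\lambda_{i,n+1}$; (f) for every regular $\mu<\lambda$ and $n<\omega$, $\mathbf I^n_\mu$ is a $\kappa^+$-complete ideal on $\mu$ containing all bounded subsets of $\mu$; (g) if $i_1,i_2\in S$, $n<\omega$ and $\{j<\kappa:\lambda_j<\lambda_{i_1,n}\}=\{j<\kappa:\lambda_j<\lambda_{i_2,n}\}$, then $\lambda_{i_1,n}=\lambda_{i_2,n}$. Then there is a club $C\subseteq\kappa$ such that for each $i\in C\cap S$ there is a set $\mathscr T$ with: (1) $\mathscr T\subseteq\bigcup_{n<\omega}\prod_{m<n}\lambda_{i,m}$, $\langle\rangle\in\mathscr T$, and $\mathscr T$ is closed under initial segments; (2) if $\eta\in\mathscr T$ and $\ell g(\eta)=n$ then $\{\alpha<\lambda_{i,n}:\eta^\frown\langle\alpha\rangle\in\mathscr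 T\}\notin\mathbf I^n_{\lambda_{i,n}}$; (3) for every $\eta\in\mathscr T$, $f(\eta)\subseteq{}^{\omega\ge}(\lambda_i)$, i.e. every sequence in $f(\eta)$ has all its values $<\lambda_i$.
   Context: An ideal on a set $X$ is a family of subsets of $X$ closed under subsets and finite unions, not containing $X$; it is $\mu$-complete if closed under unions of fewer than $\mu$ members. $\ell g(\eta)$ denotes the length of a sequence $\eta$. *)

theory Defs
  imports Main "HOL-Library.Equipollence"
begin

text \<open>Ordinals are modelled as elements of an arbitrary well-ordered type 'a;
  the ordinal alpha is identified with the set of its predecessors {..<alpha}.\<close>

definition is_cardinal :: "'a::wellorder \<Rightarrow> bool" where
  "is_cardinal a \<longleftrightarrow> (\<forall>b<a. \<not> ({..<b} \<approx> {..<a}))"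

definition cofinal_map :: "'a::wellorder \<Rightarrow> 'a \<Rightarrow> ('a \<Rightarrow> 'a) \<Rightarrow> bool" where
  "cofinal_map b a g \<longleftrightarrow> g ` {..<b} \<subseteq> {..<a} \<and> (\<forall>c<a. \<exists>d<b. c \<le> g d)"

definition cf :: "'a::wellorder \<Rightarrow> 'a" where
  "cf a = (LEAST b. \<exists>g. cofinal_map b a g)"

definition regular_cardinal :: "'a::wellorder \<Rightarrow> bool" where
  "regular_cardinal m \<longleftrightarrow> is_cardinal m \<and> infinite {..<m} \<and> cf m = m"

definition singular_cardinal :: "'a::wellorder \<Rightarrow> bool" where
  "singular_cardinal m \<longleftrightarrow> is_cardinal m \<and> infinite {..<m} \<and> cf m < m"

definition cf_omega :: "'a::wellorder \<Rightarrow> bool" where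
  "cf_omega i \<longleftrightarrow> (\<exists>s::nat \<Rightarrow> 'a. strict_mono s \<and> (\<forall>n. s n < i) \<and> (\<forall>b<i. \<exists>n. b < s n))"

definition is_limit :: "'a::wellorder \<Rightarrow> bool" where
  "is_limit d \<longleftrightarrow> (\<exists>b. b < d) \<and> (\<forall>b<d. \<exists>c<d. b < c)"

definition club :: "'a::wellorder \<Rightarrow> 'a set \<Rightarrow> bool" where
  "club k C \<longleftrightarrow> C \<subseteq> {..<k} \<and> (\<forall>b<k. \<exists>c\<in>C. b < c)
     \<and> (\<forall>d<k. ((\<exists>b. b < d) \<and> (\<forall>b<d. \<exists>c\<in>C. b < c \<and> c < d)) \<longrightarrow> d \<in> C)"

definition stationary :: "'a::wellorder \<Rightarrow> 'a set \<Rightarrow> bool" where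
  "stationary k S \<longleftrightarrow> S \<subseteq> {..<k} \<and> (\<forall>C. club k C \<longrightarrow> S \<inter> C \<noteq> {})"

definition ideal_on :: "'b set \<Rightarrow> 'b set set \<Rightarrow> bool" where
  "ideal_on X I \<longleftrightarrow> I \<subseteq> Pow X \<and> {} \<in> I \<and> X \<notin> I
     \<and> (\<forall>A\<in>I. \<forall>B. B \<subseteq> A \<longrightarrow> B \<in> I) \<and> (\<forall>A\<in>I. \<forall>B\<in>I. A \<union> B \<in> I)"

text \<open>kappa^+-complete: closed under unions of at most kappa many members.\<close>
definition succ_complete :: "'a::wellorder \<Rightarrow> 'b set set \<Rightarrow> bool" where
  "succ_complete k I \<longleftrightarrow> (\<forall>F. F \<subseteq> I \<and> F \<lesssim> {..<k} \<longrightarrow> \<Union>F \<in> I)"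

text \<open>Sequences of length at most omega: finite lists or functions on nat.\<close>
type_synonym 'a omseq = "'a list + (nat \<Rightarrow> 'a)"

fun seq_vals :: "'a omseq \<Rightarrow> 'a set" where
  "seq_vals (Inl xs) = set xs"
| "seq_vals (Inr s) = range s"

end

theory Submission
  imports Defs
begin

text \<open>
  Fix \<open>i \<in> S\<close> and call a finite sequence \<open>\<eta>\<close> admissible if \<open>\<eta> m < lamin i m\<close> for all \<open>m\<close>
  and all sequences in \<open>f \<eta>\<close> take values below \<open>lami i\<close>. The positions from which no tree of
  admissible sequences with positive successor sets grows form the least fixed point of a
  monotone operator; if the root is not in it, the sequences all of whose initial segments
  avoid it form the required tree.

  Rank these losing positions by the stage of the transfinite iteration at which they appear.
  To lower the rank of \<open>\<eta>\<close> for all \<open>i\<close> at once, the next value only has to avoid at most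
  \<open>\<kappa>\<close> sets, all in the same \<open>\<kappa>\<^sup>+\<close>-complete ideal, because the ideal depends only on
  \<open>|\<eta>|\<close> and the value \<open>lamin i |\<eta>|\<close>. So a single choice function \<open>g\<close> leads, from the root,
  every \<open>i\<close> with losing root to a non-admissible sequence in finitely many steps. If these \<open>i\<close>
  formed a stationary set, Fodor's lemma would make the number \<open>K\<close> of steps and, through the
  coherence hypothesis (g), the levels \<open>lamin i m\<close> for \<open>m < K\<close> constant on a stationary subset.
  The play of length \<open>K\<close> is then the same sequence \<open>e\<close> for all these \<open>i\<close>; as \<open>f e\<close> is bounded
  below some \<open>lami j\<close>, \<open>e\<close> is admissible for every \<open>i > j\<close> of the subset, a contradiction.
\<close>

section \<open>Cofinality and bounded subsets\<close>

lemma cf_le: "cofinal_map b a g \<Longrightarrow> cf a \<le> b"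
  unfolding cf_def by (rule Least_le) blast

lemma cofinal_map_id: "cofinal_map a a id"
  unfolding cofinal_map_def by auto

lemma cf_le_self: "cf a \<le> a"
  using cf_le cofinal_map_id by blast

lemma cofinal_map_cf: "\<exists>g. cofinal_map (cf a) a g"
proof -
  have "\<exists>b g. cofinal_map b a g"
    using cofinal_map_id by blast
  then show ?thesis
    unfolding cf_def by (rule LeastI_ex)
qed

lemma cofinal_map_comp:
  assumes "cofinal_map b k g" "cofinal_map k a h" "mono_on {..<k} h"
  shows "cofinal_map b a (h \<circ> g)"
  unfolding cofinal_map_def
proof (intro conjI allI impI)
  show "(h \<circ> g) ` {..<b} \<subseteq> {..<a}"
    using assms(1,2) unfolding cofinal_map_def by auto
  fix c assume "c < a"
  then obtain d where d: "d < k" "c \<le> h d"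
    using assms(2) unfolding cofinal_map_def by blast
  then obtain e where e: "e < b" "d \<le> g e"
    using assms(1) unfolding cofinal_map_def by blast
  then have "h d \<le> h (g e)"
    using assms(1,3) d(1) unfolding cofinal_map_def mono_on_def by blast
  then show "\<exists>e<b. c \<le> (h \<circ> g) e"
    using d(2) e(1) by force
qed

lemma cf_cf_eq:
  assumes "cofinal_map (cf a) a h" "mono_on {..<cf a} h"
  shows "cf (cf a) = cf a"
proof (rule order.antisym)
  obtain g where "cofinal_map (cf (cf a)) (cf a) g"
    using cofinal_map_cf by blast
  then show "cf a \<le> cf (cf a)"
    using cofinal_map_comp[OF _ assms] cf_le by blast
  show "cf (cf a) \<le> cf a"
    by (rule cf_le_self)
qed

lemma bounded_image_if_cf_eq:
  assumes "cf k = k" "b < k" "g ` {..<b} \<subseteq> {..<k}"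
  shows "\<exists>j<k. g ` {..<b} \<subseteq> {..<j}"
proof (rule ccontr)
  assume unbounded: "\<not> ?thesis"
  have "cofinal_map b k g"
    unfolding cofinal_map_def
  proof (intro conjI allI impI)
    fix c assume "c < k"
    then obtain d where "d < b" "\<not> g d < c"
      using unbounded by blast
    then show "\<exists>d<b. c \<le> g d"
      by (auto simp: not_less)
  qed (use assms(3) in blast)
  then show False
    using cf_le assms(1,2) by fastforce
qed

definition enum :: "'a::wellorder set \<Rightarrow> 'a \<Rightarrow> 'a" where
  "enum Y = wfrec {(x, y). x < y} (\<lambda>e b. LEAST y. y \<in> Y \<and> (\<forall>c<b. e c < y))"

lemma enum_eq: "enum Y b = (LEAST y. y \<in> Y \<and> (\<forall>c<b. enum Y c < y))"
proof -
  have "wf {(x::'a, y). x < y}"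
    using wf by (simp add: wf_def)
  then show ?thesis
    unfolding enum_def by (subst wfrec) (simp_all add: cut_def)
qed

definition enum_dom :: "'a::wellorder set \<Rightarrow> 'a set" where
  "enum_dom Y = {b. \<exists>y\<in>Y. \<forall>c<b. enum Y c < y}"

lemma enum_in_enum_dom:
  assumes "b \<in> enum_dom Y"
  shows "enum Y b \<in> Y" "c < b \<Longrightarrow> enum Y c < enum Y b"
proof -
  have "\<exists>y. y \<in> Y \<and> (\<forall>c<b. enum Y c < y)"
    using assms unfolding enum_dom_def by blast
  from LeastI_ex[OF this] show "enum Y b \<in> Y" "c < b \<Longrightarrow> enum Y c < enum Y b"
    by (simp_all flip: enum_eq)
qed

lemma enum_dom_downward: "b \<in> enum_dom Y \<Longrightarrow> c < b \<Longrightarrow> c \<in> enum_dom Y"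
  unfolding enum_dom_def using order.strict_trans by blast

lemma le_enum: "b \<in> enum_dom Y \<Longrightarrow> b \<le> enum Y b"
proof (induction b rule: less_induct)
  case (less b)
  show ?case
  proof (rule ccontr)
    assume "\<not> b \<le> enum Y b"
    then have lt: "enum Y b < b" by simp
    then have "enum Y b \<le> enum Y (enum Y b)"
      using less enum_dom_downward by blast
    moreover have "enum Y (enum Y b) < enum Y b"
      using enum_in_enum_dom(2)[OF less.prems lt] .
    ultimately show False by simp
  qed
qed

lemma enum_surj: "y \<in> Y \<Longrightarrow> y \<in> enum Y ` enum_dom Y"
proof (rule ccontr)
  assume y: "y \<in> Y" "y \<notin> enum Y ` enum_dom Y"
  have below: "b \<in> enum_dom Y \<Longrightarrow> enum Y b < y" for b
  proof (induction b rule: less_induct)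
    case (less b)
    have "\<forall>c<b. enum Y c < y"
      using less enum_dom_downward by blast
    then have "enum Y b \<le> y"
      using y(1) by (subst enum_eq) (rule Least_le, blast)
    moreover have "enum Y b \<noteq> y"
      using y(2) less.prems by blast
    ultimately show ?case by simp
  qed
  have "y \<notin> enum_dom Y"
    using le_enum below not_le by blast
  then have "(LEAST b. b \<notin> enum_dom Y) \<notin> enum_dom Y"
    by (rule LeastI)
  moreover have "\<forall>c < (LEAST b. b \<notin> enum_dom Y). enum Y c < y"
    using below not_less_Least by blast
  ultimately show False
    using y(1) unfolding enum_dom_def by blast
qed

lemma ex_bij_betw_lessThan:
  fixes Y :: "'a::wellorder set"
  assumes "Y \<subseteq> {..<k}"
  shows "\<exists>b\<le>k. \<exists>e. bij_betw e {..<b} Y"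
proof -
  have "k \<notin> enum_dom Y"
    using le_enum enum_in_enum_dom(1) assms by fastforce
  define b0 where "b0 = (LEAST b. b \<notin> enum_dom Y)"
  have b0: "b0 \<notin> enum_dom Y" "b0 \<le> k"
    unfolding b0_def using \<open>k \<notin> enum_dom Y\<close> by (rule LeastI, rule Least_le)
  have dom: "enum_dom Y = {..<b0}"
  proof
    show "enum_dom Y \<subseteq> {..<b0}"
    proof
      fix b assume "b \<in> enum_dom Y"
      then have "\<not> b0 \<le> b"
        using b0(1) enum_dom_downward[of b Y b0] by (auto simp: le_less)
      then show "b \<in> {..<b0}"
        by simp
    qed
    show "{..<b0} \<subseteq> enum_dom Y"
      unfolding b0_def using not_less_Least by blast
  qed
  have "inj_on (enum Y) (enum_dom Y)"
  proof (rule inj_onI)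
    fix b c assume "b \<in> enum_dom Y" "c \<in> enum_dom Y" "enum Y b = enum Y c"
    then show "b = c"
      using enum_in_enum_dom(2) by (cases b c rule: linorder_cases) fastforce+
  qed
  moreover have "enum Y ` enum_dom Y = Y"
    using enum_in_enum_dom(1) enum_surj by (intro subset_antisym image_subsetI subsetI)
  ultimately have "bij_betw (enum Y) {..<b0} Y"
    unfolding bij_betw_def dom by blast
  with b0(2) show ?thesis
    by blast
qed

lemma small_subset_bounded:
  assumes "cf k = k" "Y \<subseteq> {..<k}" "Y \<prec> {..<k}"
  shows "\<exists>j<k. Y \<subseteq> {..<j}"
proof -
  obtain b e where b: "b \<le> k" "bij_betw e {..<b} Y"
    using ex_bij_betw_lessThan[OF assms(2)] by blast
  have "b \<noteq> k"
    using b(2) assms(3) eqpoll_def eqpoll_sym lesspoll_def by blast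
  with b show ?thesis
    using bounded_image_if_cf_eq[OF assms(1), of b e] assms(2)
    by (simp add: bij_betw_def)
qed

lemma countable_subset_bounded:
  assumes "cf k = k" "uncountable {..<k}" "Y \<subseteq> {..<k}" "countable Y"
  shows "\<exists>j<k. Y \<subseteq> {..<j}"
proof (rule small_subset_bounded[OF assms(1,3)])
  show "Y \<prec> {..<k}"
    using assms(2-4) countable_eqpoll eqpoll_sym
    by (metis lepoll_iff_leqpoll subset_imp_lepoll)
qed

lemma ex_greater_below:
  assumes "cf k = k" "uncountable {..<k}" "x < k"
  shows "\<exists>y<k. x < y"
  using countable_subset_bounded[OF assms(1,2), of "{x}"] assms(3) by auto

lemma small_union_of_countable_bounded:
  assumes "cf k = k" "uncountable {..<k}" "F \<prec> {..<k}"
    and "\<And>x. x \<in> F \<Longrightarrow> V x \<subseteq> {..<k} \<and> countable (V x)"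
  shows "\<exists>j<k. \<forall>x\<in>F. V x \<subseteq> {..<j}"
proof -
  define b where "b x = (SOME j. j < k \<and> V x \<subseteq> {..<j})" for x
  have b: "b x < k \<and> V x \<subseteq> {..<b x}" if "x \<in> F" for x
    unfolding b_def
    by (rule someI_ex) (use countable_subset_bounded[OF assms(1,2)] assms(4)[OF that] in blast)
  have "b ` F \<prec> {..<k}"
    using lesspoll_trans1[OF image_lepoll assms(3)] .
  moreover have "b ` F \<subseteq> {..<k}"
    using b by blast
  ultimately obtain j where j: "j < k" "b ` F \<subseteq> {..<j}"
    using small_subset_bounded[OF assms(1)] by blast
  have "V x \<subseteq> {..<j}" if "x \<in> F" for x
  proof -
    have "b x < j"
      using j(2) that by blast
    then show ?thesis
      using b[OF that] by auto
  qed
  then show ?thesis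
    using j(1) by blast
qed

lemma cf_omega_imp_is_limit: "cf_omega i \<Longrightarrow> is_limit i"
  unfolding cf_omega_def is_limit_def by blast

section \<open>Clubs, stationary sets and pressing down\<close>

lemma sup_of_increasing_seq_below:
  fixes s :: "nat \<Rightarrow> 'a::wellorder"
  assumes "cf k = k" "uncountable {..<k}" "\<And>n. s n < k" "\<And>n. s n < s (Suc n)"
  obtains d where "d < k" "\<And>n. s n < d" "\<And>x. x < d \<Longrightarrow> \<exists>n. x < s n"
proof -
  obtain z where z: "z < k" "range s \<subseteq> {..<z}"
    using countable_subset_bounded[OF assms(1,2), of "range s"] assms(3) by blast
  define d where "d = (LEAST x. \<forall>n. s n < x)"
  show thesis
  proof (rule that)
    have "\<forall>n. s n < d"
      unfolding d_def by (rule LeastI[of "\<lambda>x. \<forall>n. s n < x" z]) (use z in auto)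
    then show "s n < d" for n
      by blast
    have "d \<le> z"
      unfolding d_def by (rule Least_le) (use z in auto)
    then show "d < k"
      using z(1) by simp
    fix x assume "x < d"
    then have "\<not> (\<forall>n. s n < x)"
      using not_less_Least unfolding d_def by blast
    then obtain n where "x \<le> s n"
      by (auto simp: not_less)
    then show "\<exists>n. x < s n"
      using assms(4) order.strict_trans1 by blast
  qed
qed

lemma club_unbounded: "club k C \<Longrightarrow> b < k \<Longrightarrow> \<exists>c\<in>C. b < c \<and> c < k"
  unfolding club_def by blast

lemma club_closed:
  "club k C \<Longrightarrow> d < k \<Longrightarrow> \<exists>b. b < d \<Longrightarrow> (\<And>b. b < d \<Longrightarrow> \<exists>c\<in>C. b < c \<and> c < d) \<Longrightarrow> d \<in> C"
  unfolding club_def by blast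

lemma clubs_next_point:
  assumes "cf k = k" "uncountable {..<k}" "\<And>j. club k (C j)" "x < k"
  shows "\<exists>y<k. x < y \<and> (\<forall>j<x. \<exists>c\<in>C j. x < c \<and> c < y)"
proof -
  obtain c where c: "\<And>j. c j \<in> C j \<and> x < c j \<and> c j < k"
    using club_unbounded[OF assms(3) assms(4)] by metis
  obtain y1 where y1: "y1 < k" "c ` {..<x} \<subseteq> {..<y1}"
    using bounded_image_if_cf_eq[OF assms(1,4), of c] c by blast
  obtain y2 where y2: "y2 < k" "x < y2"
    using ex_greater_below[OF assms(1,2,4)] by blast
  show ?thesis
    using y1 y2 c by (intro exI[of _ "max y1 y2"]) (auto simp: less_max_iff_disj)
qed

lemma clubs_common_point_above:
  assumes "cf k = k" "uncountable {..<k}" "\<And>j. club k (C j)" "b < k"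
  shows "\<exists>d<k. b < d \<and> (\<forall>j<d. d \<in> C j)"
proof -
  define nx where "nx x = (SOME y. y < k \<and> x < y \<and> (\<forall>j<x. \<exists>c\<in>C j. x < c \<and> c < y))" for x
  have nx: "nx x < k \<and> x < nx x \<and> (\<forall>j<x. \<exists>c\<in>C j. x < c \<and> c < nx x)" if "x < k" for x
    unfolding nx_def by (rule someI_ex) (use clubs_next_point[of k C x] assms that in blast)
  define s where "s = rec_nat b (\<lambda>_. nx)"
  have s_below: "s n < k" for n
    by (induction n) (simp_all add: s_def assms(4) nx)
  have s_Suc: "s (Suc n) = nx (s n)" for n
    by (simp add: s_def)
  then have s_incr: "s n < s (Suc n)" for n
    using nx s_below by simp
  obtain d where d: "d < k" "\<And>n. s n < d" "\<And>x. x < d \<Longrightarrow> \<exists>n. x < s n"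
    using sup_of_increasing_seq_below[of k s, OF assms(1,2) s_below s_incr] by blast
  have "d \<in> C j" if "j < d" for j
  proof (rule club_closed[OF assms(3) d(1)])
    show "\<exists>b. b < d"
      using d(2) by blast
  next
    fix x assume "x < d"
    then have "max x j < d"
      using \<open>j < d\<close> by simp
    then obtain m where m: "x < s m" "j < s m"
      using d(3) by fastforce
    then obtain c where c: "c \<in> C j" "s m < c" "c < s (Suc m)"
      using nx[OF s_below] s_Suc by metis
    have "x < c"
      using m(1) c(2) by (rule order.strict_trans)
    moreover have "c < d"
      using c(3) d(2) by (rule order.strict_trans)
    ultimately show "\<exists>c\<in>C j. x < c \<and> c < d"
      using c(1) by blast
  qed
  moreover have "b < d"
    using d(2)[of 0] by (simp add: s_def)
  ultimately show ?thesis
    using d(1) by blast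
qed

lemma club_diagonal_Inter:
  assumes "cf k = k" "uncountable {..<k}" "\<And>j. club k (C j)"
  shows "club k {d. d < k \<and> (\<forall>j<d. d \<in> C j)}" (is "club k ?D")
  unfolding club_def
proof (intro conjI allI impI)
  show "?D \<subseteq> {..<k}"
    by blast
  show "\<exists>c\<in>?D. b < c" if "b < k" for b
    using clubs_common_point_above[of k C b] assms that by blast
next
  fix d assume d: "d < k" "(\<exists>b. b < d) \<and> (\<forall>b<d. \<exists>c\<in>?D. b < c \<and> c < d)"
  have "d \<in> C j" if "j < d" for j
  proof (rule club_closed[OF assms(3) d(1)])
    fix b assume "b < d"
    then have "max b j < d"
      using \<open>j < d\<close> by simp
    then obtain c where c: "c \<in> ?D" "max b j < c" "c < d"
      using d(2) by blast
    then have "b < c" "j < c"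
      by simp_all
    moreover have "c \<in> C j"
      using c(1) \<open>j < c\<close> by simp
    ultimately show "\<exists>c\<in>C j. b < c \<and> c < d"
      using c(3) by blast
  qed (use d(2) in blast)
  then show "d \<in> ?D"
    using d(1) by blast
qed

lemma pressing_down:
  assumes "cf k = k" "uncountable {..<k}" "stationary k S" "\<And>d. d \<in> S \<Longrightarrow> h d < d"
  shows "\<exists>j. stationary k {d\<in>S. h d = j}"
proof (rule ccontr)
  assume "\<not> ?thesis"
  then have "\<forall>j. \<exists>C. club k C \<and> {d\<in>S. h d = j} \<inter> C = {}"
    using assms(3) unfolding stationary_def by blast
  from choice[OF this] obtain C where C: "\<forall>j. club k (C j) \<and> {d\<in>S. h d = j} \<inter> C j = {}"
    by blast
  have "S \<inter> {d. d < k \<and> (\<forall>j<d. d \<in> C j)} \<noteq> {}"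
    using assms(3) club_diagonal_Inter[OF assms(1,2)] C unfolding stationary_def by blast
  then obtain d where "d \<in> S" "\<forall>j<d. d \<in> C j"
    by blast
  then show False
    using C assms(4) by blast
qed

lemma stationary_unbounded:
  assumes "cf k = k" "uncountable {..<k}" "stationary k S" "j < k"
  shows "\<exists>d\<in>S. j < d"
proof -
  have "club k {x. j < x \<and> x < k}"
    unfolding club_def
  proof (intro conjI allI impI)
    fix b assume "b < k"
    then show "\<exists>c\<in>{x. j < x \<and> x < k}. b < c"
      using ex_greater_below[OF assms(1,2), of "max b j"] assms(4) by auto
  qed auto
  then show ?thesis
    using assms(3) unfolding stationary_def by blast
qed

lemma stationary_nonempty:
  assumes "cf k = k" "uncountable {..<k}" "stationary k S"
  shows "S \<noteq> {}"
proof -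
  have "{..<k} \<noteq> {}"
    using assms(2) by (metis countable_empty)
  then obtain j where "j < k"
    by blast
  then show ?thesis
    using stationary_unbounded[OF assms] by blast
qed

lemma pressing_down_finite:
  fixes h :: "nat \<Rightarrow> 'a::wellorder \<Rightarrow> 'a"
  assumes "cf k = k" "uncountable {..<k}" "stationary k S" "\<And>m d. d \<in> S \<Longrightarrow> h m d < d"
  shows "\<exists>S'\<subseteq>S. stationary k S' \<and> (\<forall>m<n. \<forall>d\<in>S'. \<forall>d'\<in>S'. h m d = h m d')"
proof (induction n)
  case 0
  show ?case
    using assms(3) by blast
next
  case (Suc n)
  then obtain S' where S': "S' \<subseteq> S" "stationary k S'" "\<forall>m<n. \<forall>d\<in>S'. \<forall>d'\<in>S'. h m d = h m d'"
    by blast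
  have "h n d < d" if "d \<in> S'" for d
    using S'(1) assms(4) that by blast
  then obtain j where "stationary k {d\<in>S'. h n d = j}"
    using pressing_down[OF assms(1,2) S'(2), of "h n"] by blast
  moreover have "\<forall>m<Suc n. \<forall>d\<in>{d\<in>S'. h n d = j}. \<forall>d'\<in>{d\<in>S'. h n d = j}. h m d = h m d'"
  proof (intro allI impI ballI)
    fix m d d' assume m: "m < Suc n" and d: "d \<in> {d\<in>S'. h n d = j}" "d' \<in> {d\<in>S'. h n d = j}"
    show "h m d = h m d'"
    proof (cases "m = n")
      case False
      then have "m < n"
        using m by simp
      then show ?thesis
        using d S'(3) by blast
    qed (use d in simp)
  qed
  ultimately show ?case
    using S'(1) by (intro exI[of _ "{d\<in>S'. h n d = j}"]) blast
qed

definition finite_ordinal :: "nat \<Rightarrow> 'a::wellorder" where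
  "finite_ordinal = rec_nat (LEAST x. True) (\<lambda>_ x. LEAST y. x < y)"

lemma finite_ordinal_0: "finite_ordinal 0 = (LEAST x. True)"
  by (simp add: finite_ordinal_def)

lemma finite_ordinal_Suc: "finite_ordinal (Suc n) = Least ((<) (finite_ordinal n))"
  by (simp add: finite_ordinal_def)

lemma finite_ordinal_below_limit:
  fixes d :: "'a::wellorder"
  assumes "is_limit d"
  shows "finite_ordinal n < d \<and> finite_ordinal n < (finite_ordinal (Suc n) :: 'a)"
proof -
  have succ: "x < Least ((<) x) \<and> Least ((<) x) < d" if "x < d" for x
    using assms that unfolding is_limit_def by (metis LeastI Least_le order.strict_trans1)
  have below: "finite_ordinal n < d" for n
  proof (induction n)
    case 0
    obtain b where "b < d"
      using assms unfolding is_limit_def by blast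
    moreover have "finite_ordinal 0 \<le> b"
      unfolding finite_ordinal_0 by (rule Least_le) simp
    ultimately show ?case
      by simp
  next
    case (Suc n)
    then show ?case
      using succ[OF Suc] unfolding finite_ordinal_Suc by blast
  qed
  then show ?thesis
    using succ[OF below] unfolding finite_ordinal_Suc by blast
qed

lemma pressing_down_nat:
  fixes g :: "'a::wellorder \<Rightarrow> nat"
  assumes "cf k = k" "uncountable {..<k}" "stationary k S" "\<And>d. d \<in> S \<Longrightarrow> is_limit d"
  shows "\<exists>n. stationary k {d\<in>S. g d = n}"
proof -
  have "finite_ordinal (g d) < d" if "d \<in> S" for d
    using finite_ordinal_below_limit assms(4)[OF that] by blast
  then obtain j :: 'a where j: "stationary k {d\<in>S. finite_ordinal (g d) = j}"
    using pressing_down[OF assms(1-3), of "\<lambda>d. finite_ordinal (g d)"] by blast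
  then obtain d0 where d0: "d0 \<in> S" "finite_ordinal (g d0) = j"
    using stationary_nonempty[OF assms(1,2)] by blast
  have "strict_mono (finite_ordinal :: nat \<Rightarrow> 'a)"
    unfolding strict_mono_Suc_iff using finite_ordinal_below_limit[OF assms(4)[OF d0(1)]] by blast
  then have "{d\<in>S. finite_ordinal (g d) = j} = {d\<in>S. g d = g d0}"
    by (simp add: strict_mono_eq flip: d0(2))
  then show ?thesis
    using j by auto
qed

section \<open>Ranks in the transfinite iteration of a monotone operator\<close>

lemma iterates_cmp_if_extreme:
  assumes "mono F" "X \<in> ccpo_class.iterates F" "\<forall>Z\<in>ccpo_class.iterates F. Z \<subset> X \<longrightarrow> F Z \<subseteq> X"
    and "Y \<in> ccpo_class.iterates F"
  shows "Y \<subseteq> X \<or> F X \<subseteq> Y"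
  using assms(4)
proof (induction rule: ccpo_class.iterates.induct)
  case (step Y)
  then show ?case
    using assms(3) ccpo_class.iterates_le_f[OF step.hyps(1) assms(1)] by blast
qed blast

lemma iterates_extreme:
  assumes "mono F" "X \<in> ccpo_class.iterates F"
  shows "\<forall>Y\<in>ccpo_class.iterates F. Y \<subset> X \<longrightarrow> F Y \<subseteq> X"
  using assms(2)
proof (induction rule: ccpo_class.iterates.induct)
  case (step X)
  show ?case
  proof (intro ballI impI)
    fix Y assume Y: "Y \<in> ccpo_class.iterates F" "Y \<subset> F X"
    then have "Y \<subseteq> X"
      using iterates_cmp_if_extreme[OF assms(1) step.hyps(1) step.IH Y(1)] by blast
    then show "F Y \<subseteq> F X"
      by (rule monoD[OF assms(1)])
  qed
next
  case (Sup M)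
  show ?case
  proof (intro ballI impI)
    fix Y assume Y: "Y \<in> ccpo_class.iterates F" "Y \<subset> \<Union>M"
    have cmp: "Y \<subseteq> Z \<or> F Z \<subseteq> Y" if "Z \<in> M" for Z
      using iterates_cmp_if_extreme[OF assms(1)] Sup.IH that Y(1) by blast
    have cmp': "Z \<subseteq> Y \<or> F Y \<subseteq> Z" if "Z \<in> M" "Y \<in> M" for Z
      using iterates_cmp_if_extreme[OF assms(1)] Sup.IH that by blast
    obtain Z where Z: "Z \<in> M" "Y \<subseteq> Z"
      using cmp Y(2) ccpo_class.iterates_le_f[OF _ assms(1)] Sup.IH by blast
    obtain Z' where Z': "Z' \<in> M" "\<not> Z' \<subseteq> Y"
      using Y(2) by blast
    show "F Y \<subseteq> \<Union>M"
      using Sup.IH Z Z' cmp' Y(1) by (cases "Y = Z") blast+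
  qed
qed

lemma iterates_cmp:
  assumes "mono F" "X \<in> ccpo_class.iterates F" "Y \<in> ccpo_class.iterates F"
  shows "Y \<subseteq> X \<or> F X \<subseteq> Y"
  using iterates_cmp_if_extreme[OF assms(1,2) iterates_extreme[OF assms(1,2)] assms(3)] .

text \<open>For \<open>x \<in> lfp F\<close> this is the last stage of the iteration before \<open>x\<close> appears,
  which serves as the rank of \<open>x\<close>.\<close>

definition stage_below :: "('b set \<Rightarrow> 'b set) \<Rightarrow> 'b \<Rightarrow> 'b set" where
  "stage_below F x = \<Union>{X \<in> ccpo_class.iterates F. x \<notin> X}"

lemma stage_below_in_iterates: "mono F \<Longrightarrow> stage_below F x \<in> ccpo_class.iterates F"
  unfolding stage_below_def
  by (rule ccpo_class.iterates.Sup) (auto intro: chain_subset[OF ccpo_class.chain_iterates])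

lemma not_in_stage_below: "x \<notin> stage_below F x"
  unfolding stage_below_def by blast

lemma lfp_eq_Union_iterates: "mono F \<Longrightarrow> lfp F = \<Union>(ccpo_class.iterates F)"
  by (simp add: lfp_eq_fixp ccpo_class.fixp_def)

lemma in_step_stage_below:
  assumes "mono F" "x \<in> lfp F"
  shows "x \<in> F (stage_below F x)"
proof (rule ccontr)
  assume "x \<notin> F (stage_below F x)"
  then have "F (stage_below F x) \<subseteq> stage_below F x"
    using ccpo_class.iterates.step[OF stage_below_in_iterates[OF assms(1)]]
    unfolding stage_below_def by blast
  then have "lfp F \<subseteq> stage_below F x"
    by (rule lfp_lowerbound)
  then show False
    using assms(2) not_in_stage_below[of x F] by blast
qed

lemma lfp_rank_induct:
  assumes "mono F" "x \<in> lfp F"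
    and step: "\<And>x. x \<in> lfp F \<Longrightarrow> (\<And>y. y \<in> stage_below F x \<Longrightarrow> P y) \<Longrightarrow> P x"
  shows "P x"
proof -
  have "\<forall>x\<in>X. P x" if "X \<in> ccpo_class.iterates F" for X
    using that
  proof (induction rule: ccpo_class.iterates.induct)
    case (step X)
    show ?case
    proof
      fix x assume x: "x \<in> F X"
      show "P x"
      proof (cases "x \<in> X")
        case False
        have "stage_below F x \<subseteq> X"
          using iterates_cmp[OF assms(1) step.hyps(1) stage_below_in_iterates[OF assms(1)]]
            x not_in_stage_below[of x F] by blast
        moreover have "F X \<subseteq> lfp F"
          unfolding lfp_eq_Union_iterates[OF assms(1)]
          by (rule Union_upper[OF ccpo_class.iterates.step[OF step.hyps(1)]])
        ultimately show ?thesis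
          using x step.IH by - (rule assms(3), blast+)
      qed (use step.IH in blast)
    qed
  qed blast
  then show ?thesis
    using assms(2) unfolding lfp_eq_Union_iterates[OF assms(1)] by blast
qed

section \<open>Games for positive trees\<close>

text \<open>In the game at \<open>\<eta>\<close> the builder needs a \<open>J (length \<eta>)\<close>-positive set of one-step
  extensions, every position reached having to satisfy \<open>P\<close>; \<open>losing\<close> is the set of positions
  from which the builder cannot keep this up forever.\<close>

definition losing_step ::
  "(nat \<Rightarrow> 'a::order) \<Rightarrow> (nat \<Rightarrow> 'a set set) \<Rightarrow> ('a list \<Rightarrow> bool) \<Rightarrow> 'a list set \<Rightarrow> 'a list set" where
  "losing_step \<mu> J P X = {\<eta>. \<not> P \<eta> \<or> {\<alpha>. \<alpha> < \<mu> (length \<eta>) \<and> \<eta> @ [\<alpha>] \<notin> X} \<in> J (length \<eta>)}"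

definition losing :: "(nat \<Rightarrow> 'a::order) \<Rightarrow> (nat \<Rightarrow> 'a set set) \<Rightarrow> ('a list \<Rightarrow> bool) \<Rightarrow> 'a list set" where
  "losing \<mu> J P = lfp (losing_step \<mu> J P)"

lemma mono_losing_step:
  assumes "\<And>n A B. A \<in> J n \<Longrightarrow> B \<subseteq> A \<Longrightarrow> B \<in> J n"
  shows "mono (losing_step \<mu> J P)"
proof (rule monoI, rule subsetI)
  fix X Y \<eta> assume "X \<subseteq> Y" "\<eta> \<in> losing_step \<mu> J P X"
  then show "\<eta> \<in> losing_step \<mu> J P Y"
    using assms[of "{\<alpha>. \<alpha> < \<mu> (length \<eta>) \<and> \<eta> @ [\<alpha>] \<notin> X}" "length \<eta>"
        "{\<alpha>. \<alpha> < \<mu> (length \<eta>) \<and> \<eta> @ [\<alpha>] \<notin> Y}"]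
    unfolding losing_step_def by blast
qed

lemma positive_tree_if_root_not_losing:
  assumes "\<And>n A B. A \<in> J n \<Longrightarrow> B \<subseteq> A \<Longrightarrow> B \<in> J n" "[] \<notin> losing \<mu> J P"
  shows "\<exists>T. [] \<in> T \<and> (\<forall>\<eta>\<in>T. \<forall>k\<le>length \<eta>. take k \<eta> \<in> T)
           \<and> (\<forall>\<eta>\<in>T. P \<eta> \<and> {\<alpha>. \<alpha> < \<mu> (length \<eta>) \<and> \<eta> @ [\<alpha>] \<in> T} \<notin> J (length \<eta>))"
proof -
  let ?L = "losing \<mu> J P"
  define T where "T = {\<eta>. \<forall>k\<le>length \<eta>. take k \<eta> \<notin> ?L}"
  have fixpoint: "losing_step \<mu> J P ?L = ?L"
    unfolding losing_def using lfp_fixpoint[OF mono_losing_step[OF assms(1)]] .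
  have "[] \<in> T"
    unfolding T_def using assms(2) by simp
  moreover have "\<forall>\<eta>\<in>T. \<forall>k\<le>length \<eta>. take k \<eta> \<in> T"
    unfolding T_def by (simp add: min_def)
  moreover have "P \<eta> \<and> {\<alpha>. \<alpha> < \<mu> (length \<eta>) \<and> \<eta> @ [\<alpha>] \<in> T} \<notin> J (length \<eta>)" if "\<eta> \<in> T" for \<eta>
  proof -
    have "take (length \<eta>) \<eta> \<notin> ?L"
      using that unfolding T_def by blast
    then have "\<eta> \<notin> losing_step \<mu> J P ?L"
      unfolding fixpoint by simp
    moreover have "\<eta> @ [\<alpha>] \<in> T \<longleftrightarrow> \<eta> @ [\<alpha>] \<notin> ?L" for \<alpha>
      using that unfolding T_def by (auto simp: le_Suc_eq)
    ultimately show ?thesis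
      unfolding losing_step_def by simp
  qed
  ultimately show ?thesis
    by blast
qed

fun play :: "('a list \<Rightarrow> 'b \<Rightarrow> 'a) \<Rightarrow> (nat \<Rightarrow> 'b) \<Rightarrow> 'a list \<Rightarrow> nat \<Rightarrow> 'a list" where
  "play g \<mu> \<eta> 0 = \<eta>"
| "play g \<mu> \<eta> (Suc k) = play g \<mu> (\<eta> @ [g \<eta> (\<mu> (length \<eta>))]) k"

lemma play_cong: "(\<And>m. m < length \<eta> + k \<Longrightarrow> \<mu> m = \<mu>' m) \<Longrightarrow> play g \<mu> \<eta> k = play g \<mu>' \<eta> k"
proof (induction k arbitrary: \<eta>)
  case (Suc k)
  have "play g \<mu> (\<eta> @ [a]) k = play g \<mu>' (\<eta> @ [a]) k" for a
    by (rule Suc.IH) (use Suc.prems in simp)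
  then show ?case
    using Suc.prems[of "length \<eta>"] by simp
qed simp

lemma play_below:
  assumes "\<And>\<eta>. g \<eta> (\<mu> (length \<eta>)) < \<mu> (length \<eta>)" "\<forall>m<length \<eta>. \<eta> ! m < \<mu> m"
  shows "\<forall>m<length (play g \<mu> \<eta> k). play g \<mu> \<eta> k ! m < \<mu> m"
  using assms(2)
proof (induction k arbitrary: \<eta>)
  case (Suc k)
  have "\<forall>m<length (\<eta> @ [g \<eta> (\<mu> (length \<eta>))]). (\<eta> @ [g \<eta> (\<mu> (length \<eta>))]) ! m < \<mu> m"
    using Suc.prems assms(1) by (auto simp: nth_append less_Suc_eq)
  then show ?case
    using Suc.IH by simp
qed simp

lemma ex_choice_avoiding:
  fixes \<mu> :: "'i \<Rightarrow> nat \<Rightarrow> 'a::order" and k :: "'k::wellorder"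
  assumes ideal: "\<And>\<delta> n. \<delta> \<in> D \<Longrightarrow> ideal_on {..<\<mu> \<delta> n} (I n (\<mu> \<delta> n))"
    and complete: "\<And>\<delta> n. \<delta> \<in> D \<Longrightarrow> succ_complete k (I n (\<mu> \<delta> n))"
    and small: "D \<lesssim> {..<k}"
    and A: "\<And>\<delta> \<eta>. \<delta> \<in> D \<Longrightarrow> Q \<delta> \<eta> \<Longrightarrow> A \<delta> \<eta> \<in> I (length \<eta>) (\<mu> \<delta> (length \<eta>))"
  shows "\<exists>g. \<forall>\<delta>\<in>D. \<forall>\<eta>. g \<eta> (\<mu> \<delta> (length \<eta>)) < \<mu> \<delta> (length \<eta>)
                         \<and> (Q \<delta> \<eta> \<longrightarrow> g \<eta> (\<mu> \<delta> (length \<eta>)) \<notin> A \<delta> \<eta>)"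
proof -
  define U where "U \<eta> \<nu> = \<Union>((\<lambda>\<delta>. A \<delta> \<eta>) ` {\<delta>\<in>D. \<mu> \<delta> (length \<eta>) = \<nu> \<and> Q \<delta> \<eta>})" for \<eta> \<nu>
  let ?g = "\<lambda>\<eta> \<nu>. SOME \<alpha>. \<alpha> < \<nu> \<and> \<alpha> \<notin> U \<eta> \<nu>"
  have ex: "\<exists>\<alpha>. \<alpha> < \<mu> \<delta> (length \<eta>) \<and> \<alpha> \<notin> U \<eta> (\<mu> \<delta> (length \<eta>))" if "\<delta> \<in> D" for \<delta> \<eta>
  proof -
    let ?n = "length \<eta>" and ?\<nu> = "\<mu> \<delta> (length \<eta>)"
    let ?D = "{\<delta>'\<in>D. \<mu> \<delta>' ?n = ?\<nu> \<and> Q \<delta>' \<eta>}"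
    have "(\<lambda>\<delta>'. A \<delta>' \<eta>) ` ?D \<subseteq> I ?n ?\<nu>"
    proof (rule image_subsetI)
      fix \<delta>' assume "\<delta>' \<in> ?D"
      then show "A \<delta>' \<eta> \<in> I ?n ?\<nu>"
        using A[of \<delta>' \<eta>] by simp
    qed
    moreover have "(\<lambda>\<delta>'. A \<delta>' \<eta>) ` ?D \<lesssim> {..<k}"
      using lepoll_trans[OF image_lepoll lepoll_trans[OF subset_imp_lepoll small]]
      by (metis (no_types, lifting) mem_Collect_eq subsetI)
    ultimately have U: "U \<eta> ?\<nu> \<in> I ?n ?\<nu>"
      using complete[OF that] unfolding U_def succ_complete_def by blast
    show ?thesis
    proof (rule ccontr)
      assume "\<not> ?thesis"
      then have "{..<?\<nu>} \<subseteq> U \<eta> ?\<nu>"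
        by auto
      then show False
        using U ideal[OF that] unfolding ideal_on_def by blast
    qed
  qed
  have "?g \<eta> (\<mu> \<delta> (length \<eta>)) < \<mu> \<delta> (length \<eta>) \<and> ?g \<eta> (\<mu> \<delta> (length \<eta>)) \<notin> U \<eta> (\<mu> \<delta> (length \<eta>))"
    if "\<delta> \<in> D" for \<delta> \<eta>
    using someI_ex[OF ex[OF that]] by simp
  moreover have "A \<delta> \<eta> \<subseteq> U \<eta> (\<mu> \<delta> (length \<eta>))" if "\<delta> \<in> D" "Q \<delta> \<eta>" for \<delta> \<eta>
    unfolding U_def using that by blast
  ultimately show ?thesis
    by (intro exI[of _ ?g]) blast
qed

lemma uniform_strategy:
  fixes \<mu> :: "'i \<Rightarrow> nat \<Rightarrow> 'a::order" and k :: "'k::wellorder"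
  assumes ideal: "\<And>\<delta> n. \<delta> \<in> D \<Longrightarrow> ideal_on {..<\<mu> \<delta> n} (I n (\<mu> \<delta> n))"
    and complete: "\<And>\<delta> n. \<delta> \<in> D \<Longrightarrow> succ_complete k (I n (\<mu> \<delta> n))"
    and small: "D \<lesssim> {..<k}"
  shows "\<exists>g. \<forall>\<delta>\<in>D. (\<forall>\<eta>. g \<eta> (\<mu> \<delta> (length \<eta>)) < \<mu> \<delta> (length \<eta>))
              \<and> (\<forall>\<eta>\<in>losing (\<mu> \<delta>) (\<lambda>n. I n (\<mu> \<delta> n)) (P \<delta>). \<exists>m. \<not> P \<delta> (play g (\<mu> \<delta>) \<eta> m))"
proof -
  let ?F = "\<lambda>\<delta>. losing_step (\<mu> \<delta>) (\<lambda>n. I n (\<mu> \<delta> n)) (P \<delta>)"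
  let ?L = "\<lambda>\<delta>. losing (\<mu> \<delta>) (\<lambda>n. I n (\<mu> \<delta> n)) (P \<delta>)"
  have mono: "mono (?F \<delta>)" if "\<delta> \<in> D" for \<delta>
    by (rule mono_losing_step) (use ideal[OF that] in \<open>unfold ideal_on_def, blast\<close>)
  \<comment> \<open>As \<open>\<eta> \<in> ?F \<delta> (stage_below (?F \<delta>) \<eta>)\<close>, this set is small; avoiding it lowers the rank.\<close>
  define A where "A \<delta> \<eta> = {\<alpha>. \<alpha> < \<mu> \<delta> (length \<eta>) \<and> \<eta> @ [\<alpha>] \<notin> stage_below (?F \<delta>) \<eta>}" for \<delta> \<eta>
  have "A \<delta> \<eta> \<in> I (length \<eta>) (\<mu> \<delta> (length \<eta>))" if "\<delta> \<in> D" "\<eta> \<in> ?L \<delta> \<and> P \<delta> \<eta>" for \<delta> \<eta>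
    using in_step_stage_below[OF mono[OF that(1)], of \<eta>] that(2)
    unfolding A_def losing_def losing_step_def by simp
  then obtain g where g: "\<forall>\<delta>\<in>D. \<forall>\<eta>. g \<eta> (\<mu> \<delta> (length \<eta>)) < \<mu> \<delta> (length \<eta>)
                  \<and> (\<eta> \<in> ?L \<delta> \<and> P \<delta> \<eta> \<longrightarrow> g \<eta> (\<mu> \<delta> (length \<eta>)) \<notin> A \<delta> \<eta>)"
    using ex_choice_avoiding[of D \<mu> I k "\<lambda>\<delta> \<eta>. \<eta> \<in> ?L \<delta> \<and> P \<delta> \<eta>" A, OF ideal complete small] by blast
  have "\<exists>m. \<not> P \<delta> (play g (\<mu> \<delta>) \<eta> m)" if "\<delta> \<in> D" "\<eta> \<in> ?L \<delta>" for \<delta> \<eta>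
  proof (rule lfp_rank_induct[of "?F \<delta>" \<eta>])
    show "mono (?F \<delta>)" "\<eta> \<in> lfp (?F \<delta>)"
      using mono[OF that(1)] that(2) unfolding losing_def by simp_all
    fix \<eta> assume \<eta>: "\<eta> \<in> lfp (?F \<delta>)"
      and IH: "\<And>\<eta>'. \<eta>' \<in> stage_below (?F \<delta>) \<eta> \<Longrightarrow> \<exists>m. \<not> P \<delta> (play g (\<mu> \<delta>) \<eta>' m)"
    show "\<exists>m. \<not> P \<delta> (play g (\<mu> \<delta>) \<eta> m)"
    proof (cases "P \<delta> \<eta>")
      case True
      let ?a = "g \<eta> (\<mu> \<delta> (length \<eta>))"
      have "?a \<notin> A \<delta> \<eta>" "?a < \<mu> \<delta> (length \<eta>)"
        using g that(1) \<eta> True unfolding losing_def by blast+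
      then have "\<eta> @ [?a] \<in> stage_below (?F \<delta>) \<eta>"
        unfolding A_def by blast
      then obtain m where "\<not> P \<delta> (play g (\<mu> \<delta>) (\<eta> @ [?a]) m)"
        using IH by blast
      then have "\<not> P \<delta> (play g (\<mu> \<delta>) \<eta> (Suc m))"
        by simp
      then show ?thesis
        by blast
    qed (metis play.simps(1))
  qed
  then show ?thesis
    using g by blast
qed

lemma countable_seq_vals: "countable (seq_vals \<nu>)"
  by (cases \<nu>) (auto intro: countable_finite)

locale club_tree_setting =
  fixes lam :: "'a::wellorder" and kap :: 'a
    and f :: "'a list \<Rightarrow> 'a omseq set"
    and lami :: "'a \<Rightarrow> 'a" and lamin :: "'a \<Rightarrow> nat \<Rightarrow> 'a"
    and S :: "'a set" and I :: "nat \<Rightarrow> 'a \<Rightarrow> 'a set set"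
  assumes kap_regular: "cf kap = kap"
    and kap_unc: "uncountable {..<kap}"
    and f_ok: "\<forall>\<eta>. set \<eta> \<subseteq> {..<lam} \<longrightarrow>
                 (\<forall>\<nu>\<in>f \<eta>. seq_vals \<nu> \<subseteq> {..<lam}) \<and> f \<eta> \<prec> {..<kap}"
    and lami_below: "\<forall>i<kap. lami i < lam"
    and lami_sup: "\<forall>b<lam. \<exists>i<kap. b < lami i"
    and lami_incr: "\<forall>i j. i < j \<and> j < kap \<longrightarrow> lami i < lami j"
    and lami_cont: "\<forall>d<kap. is_limit d \<longrightarrow> (\<forall>b<lami d. \<exists>j<d. b < lami j)"
    and S_sub: "S \<subseteq> {i. i < kap \<and> is_limit i}"
    and S_stat: "stationary kap S"
    and lamin_below: "\<forall>i\<in>S. \<forall>n. lamin i n < lami i"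
    and I_ideal: "\<forall>i\<in>S. \<forall>n. ideal_on {..<lamin i n} (I n (lamin i n))
                                \<and> succ_complete kap (I n (lamin i n))"
    and coh: "\<forall>i1\<in>S. \<forall>i2\<in>S. \<forall>n.
                {j. j < kap \<and> lami j < lamin i1 n} = {j. j < kap \<and> lami j < lamin i2 n}
                \<longrightarrow> lamin i1 n = lamin i2 n"
begin

lemma lamin_below_lam: "\<delta> \<in> S \<Longrightarrow> lamin \<delta> n < lam"
  using lamin_below lami_below S_sub order.strict_trans by blast

lemma lami_mono: "i \<le> j \<Longrightarrow> j < kap \<Longrightarrow> lami i \<le> lami j"
  using lami_incr by (cases "i = j") (auto simp: le_less)

definition level_index :: "nat \<Rightarrow> 'a \<Rightarrow> 'a" where
  "level_index m \<delta> = (LEAST j. lamin \<delta> m \<le> lami j)"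

lemma level_index_below:
  assumes "\<delta> \<in> S"
  shows "level_index m \<delta> < \<delta>" "lamin \<delta> m \<le> lami (level_index m \<delta>)"
proof -
  have "\<delta> < kap" "is_limit \<delta>"
    using S_sub assms by auto
  moreover have "lamin \<delta> m < lami \<delta>"
    using lamin_below assms by blast
  ultimately obtain j where j: "j < \<delta>" "lamin \<delta> m < lami j"
    using lami_cont by blast
  then have "lamin \<delta> m \<le> lami j"
    by simp
  have "level_index m \<delta> \<le> j"
    unfolding level_index_def using \<open>lamin \<delta> m \<le> lami j\<close> by (rule Least_le)
  then show "level_index m \<delta> < \<delta>"
    using j(1) by simp
  show "lamin \<delta> m \<le> lami (level_index m \<delta>)"
    unfolding level_index_def using \<open>lamin \<delta> m \<le> lami j\<close> by (rule LeastI)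
qed

lemma lami_less_lamin_iff:
  assumes "\<delta> \<in> S" "j < kap"
  shows "lami j < lamin \<delta> m \<longleftrightarrow> j < level_index m \<delta>"
proof
  assume "lami j < lamin \<delta> m"
  moreover have "lamin \<delta> m \<le> lami j" if "level_index m \<delta> \<le> j"
    using level_index_below(2)[OF assms(1)] lami_mono[OF that assms(2)] by (rule order.trans)
  ultimately show "j < level_index m \<delta>"
    by (meson not_le)
next
  assume "j < level_index m \<delta>"
  then have "\<not> lamin \<delta> m \<le> lami j"
    unfolding level_index_def by (rule not_less_Least)
  then show "lami j < lamin \<delta> m"
    by simp
qed

lemma lamin_eq_if_level_index_eq:
  assumes "\<delta>1 \<in> S" "\<delta>2 \<in> S" "level_index m \<delta>1 = level_index m \<delta>2"
  shows "lamin \<delta>1 m = lamin \<delta>2 m"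
proof -
  have "lami j < lamin \<delta>1 m \<longleftrightarrow> lami j < lamin \<delta>2 m" if "j < kap" for j
    using lami_less_lamin_iff[OF assms(1) that] lami_less_lamin_iff[OF assms(2) that] assms(3) by simp
  then have "{j. j < kap \<and> lami j < lamin \<delta>1 m} = {j. j < kap \<and> lami j < lamin \<delta>2 m}"
    by (intro Collect_cong) blast
  then show ?thesis
    by (rule coh[rule_format, OF assms(1,2)])
qed

lemma levels_stabilize:
  assumes "B \<subseteq> S" "stationary kap B"
  shows "\<exists>B'\<subseteq>B. stationary kap B' \<and> (\<forall>m<n. \<forall>\<delta>\<in>B'. \<forall>\<delta>'\<in>B'. lamin \<delta> m = lamin \<delta>' m)"
proof -
  have "level_index m \<delta> < \<delta>" if "\<delta> \<in> B" for m \<delta>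
    using level_index_below(1) assms(1) that by blast
  then obtain B' where B': "B' \<subseteq> B" "stationary kap B'"
      "\<forall>m<n. \<forall>\<delta>\<in>B'. \<forall>\<delta>'\<in>B'. level_index m \<delta> = level_index m \<delta>'"
    using pressing_down_finite[OF kap_regular kap_unc assms(2), of level_index n] by blast
  have "lamin \<delta> m = lamin \<delta>' m" if "m < n" "\<delta> \<in> B'" "\<delta>' \<in> B'" for m \<delta> \<delta>'
    using lamin_eq_if_level_index_eq[of \<delta> \<delta>' m] B' assms(1) that by blast
  then show ?thesis
    using B'(1,2) by blast
qed

lemma f_values_bounded:
  assumes "set \<eta> \<subseteq> {..<lam}"
  shows "\<exists>j<kap. \<forall>\<nu>\<in>f \<eta>. seq_vals \<nu> \<subseteq> {..<lami j}"
proof -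
  define idx where "idx x = (LEAST j. j < kap \<and> x < lami j)" for x
  have idx: "idx x < kap \<and> x < lami (idx x)" if "x < lam" for x
    unfolding idx_def by (rule LeastI_ex) (use lami_sup that in blast)
  have f_lam: "\<forall>\<nu>\<in>f \<eta>. seq_vals \<nu> \<subseteq> {..<lam}" and f_small: "f \<eta> \<prec> {..<kap}"
    using f_ok assms by blast+
  have "idx ` seq_vals \<nu> \<subseteq> {..<kap} \<and> countable (idx ` seq_vals \<nu>)" if "\<nu> \<in> f \<eta>" for \<nu>
    using idx f_lam that countable_seq_vals by blast
  then obtain j where j: "j < kap" "\<forall>\<nu>\<in>f \<eta>. idx ` seq_vals \<nu> \<subseteq> {..<j}"
    using small_union_of_countable_bounded[OF kap_regular kap_unc f_small, of "\<lambda>\<nu>. idx ` seq_vals \<nu>"]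
    by blast
  have "x < lami j" if "\<nu> \<in> f \<eta>" "x \<in> seq_vals \<nu>" for \<nu> x
  proof -
    have "x < lam" "idx x < j"
      using f_lam j(2) that by blast+
    then show ?thesis
      using idx lami_incr j(1) by (meson order.strict_trans)
  qed
  then show ?thesis
    using j(1) by blast
qed

definition admissible :: "'a \<Rightarrow> 'a list \<Rightarrow> bool" where
  "admissible \<delta> \<eta> \<longleftrightarrow> (\<forall>m<length \<eta>. \<eta> ! m < lamin \<delta> m) \<and> (\<forall>\<nu>\<in>f \<eta>. seq_vals \<nu> \<subseteq> {..<lami \<delta>})"

lemma admissible_for_some_in_stationary:
  assumes "B \<subseteq> S" "stationary kap B" "\<forall>\<delta>\<in>B. \<forall>m<length e. e ! m < lamin \<delta> m"
  shows "\<exists>\<delta>\<in>B. admissible \<delta> e"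
proof -
  obtain \<delta>1 where "\<delta>1 \<in> B"
    using stationary_nonempty[OF kap_regular kap_unc assms(2)] by blast
  then have "\<delta>1 \<in> S"
    using assms(1) by blast
  have "e ! m < lam" if "m < length e" for m
    using assms(3) \<open>\<delta>1 \<in> B\<close> lamin_below_lam[OF \<open>\<delta>1 \<in> S\<close>, of m] that
    by (meson order.strict_trans)
  then have "set e \<subseteq> {..<lam}"
    by (auto simp: in_set_conv_nth)
  then obtain j where j: "j < kap" "\<forall>\<nu>\<in>f e. seq_vals \<nu> \<subseteq> {..<lami j}"
    using f_values_bounded by blast
  obtain \<delta> where \<delta>: "\<delta> \<in> B" "j < \<delta>"
    using stationary_unbounded[OF kap_regular kap_unc assms(2) j(1)] by blast
  then have "lami j < lami \<delta>"
    using lami_incr S_sub assms(1) by blast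
  then have "admissible \<delta> e"
    unfolding admissible_def using assms(3) \<delta>(1) j(2) by fastforce
  then show ?thesis
    using \<delta>(1) by blast
qed

lemma not_stationary_refuted_roots:
  assumes g_below: "\<forall>\<delta>\<in>S. \<forall>\<eta>. g \<eta> (lamin \<delta> (length \<eta>)) < lamin \<delta> (length \<eta>)"
    and "B \<subseteq> S" "stationary kap B"
    and refuted: "\<forall>\<delta>\<in>B. \<exists>m. \<not> admissible \<delta> (play g (lamin \<delta>) [] m)"
  shows False
proof -
  define len where "len \<delta> = (SOME m. \<not> admissible \<delta> (play g (lamin \<delta>) [] m))" for \<delta>
  have len: "\<not> admissible \<delta> (play g (lamin \<delta>) [] (len \<delta>))" if "\<delta> \<in> B" for \<delta>
    unfolding len_def by (rule someI_ex) (use refuted that in blast)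
  have "is_limit \<delta>" if "\<delta> \<in> B" for \<delta>
    using S_sub assms(2) that by blast
  then obtain K where "stationary kap {\<delta>\<in>B. len \<delta> = K}"
    using pressing_down_nat[OF kap_regular kap_unc assms(3), of len] by blast
  then obtain B1 where B1: "B1 \<subseteq> {\<delta>\<in>B. len \<delta> = K}" "stationary kap B1"
      "\<forall>m<K. \<forall>\<delta>\<in>B1. \<forall>\<delta>'\<in>B1. lamin \<delta> m = lamin \<delta>' m"
    using levels_stabilize[of "{\<delta>\<in>B. len \<delta> = K}" K] assms(2) by blast
  obtain \<delta>1 where "\<delta>1 \<in> B1"
    using stationary_nonempty[OF kap_regular kap_unc B1(2)] by blast
  define e where "e = play g (lamin \<delta>1) [] K"
  have same: "play g (lamin \<delta>) [] K = e" if "\<delta> \<in> B1" for \<delta>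
  proof -
    have "lamin \<delta> m = lamin \<delta>1 m" if "m < K" for m
      using B1(3) \<open>\<delta> \<in> B1\<close> \<open>\<delta>1 \<in> B1\<close> that by blast
    then show ?thesis
      unfolding e_def by (intro play_cong) simp
  qed
  have "\<forall>m<length e. e ! m < lamin \<delta> m" if "\<delta> \<in> B1" for \<delta>
  proof -
    have "\<delta> \<in> S"
      using B1(1) assms(2) that by blast
    then show ?thesis
      using play_below[of g "lamin \<delta>" "[]" K] g_below same[OF that] by simp
  qed
  then obtain \<delta> where "\<delta> \<in> B1" "admissible \<delta> e"
    using admissible_for_some_in_stationary[of B1 e] B1(1,2) assms(2) by blast
  then show False
    using len[of \<delta>] same B1(1) by auto
qed

theorem club_of_positive_trees:
  "\<exists>C. club kap C \<and> (\<forall>i\<in>C \<inter> S. \<exists>T :: 'a list set.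
            (\<forall>\<eta>\<in>T. \<forall>m<length \<eta>. \<eta> ! m < lamin i m)
          \<and> [] \<in> T
          \<and> (\<forall>\<eta>\<in>T. \<forall>k\<le>length \<eta>. take k \<eta> \<in> T)
          \<and> (\<forall>\<eta>\<in>T. {\<alpha>. \<alpha> < lamin i (length \<eta>) \<and> \<eta> @ [\<alpha>] \<in> T}
                      \<notin> I (length \<eta>) (lamin i (length \<eta>)))
          \<and> (\<forall>\<eta>\<in>T. \<forall>\<nu>\<in>f \<eta>. seq_vals \<nu> \<subseteq> {..<lami i}))"
proof -
  let ?L = "\<lambda>\<delta>. losing (lamin \<delta>) (\<lambda>n. I n (lamin \<delta> n)) (admissible \<delta>)"
  have ideal: "ideal_on {..<lamin \<delta> n} (I n (lamin \<delta> n))" "succ_complete kap (I n (lamin \<delta> n))"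
    if "\<delta> \<in> S" for \<delta> n
    using I_ideal that by blast+
  have "S \<lesssim> {..<kap}"
    using S_sub by (intro subset_imp_lepoll) auto
  then obtain g where g: "\<forall>\<delta>\<in>S. (\<forall>\<eta>. g \<eta> (lamin \<delta> (length \<eta>)) < lamin \<delta> (length \<eta>))
      \<and> (\<forall>\<eta>\<in>?L \<delta>. \<exists>m. \<not> admissible \<delta> (play g (lamin \<delta>) \<eta> m))"
    using uniform_strategy[of S lamin I kap admissible] ideal by blast
  define B where "B = {\<delta>\<in>S. [] \<in> ?L \<delta>}"
  have "\<not> stationary kap B"
    using not_stationary_refuted_roots[of g B] g unfolding B_def by blast
  moreover have "B \<subseteq> {..<kap}"
    using S_sub unfolding B_def by auto
  ultimately have "\<exists>C. club kap C \<and> B \<inter> C = {}"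
    by (simp add: stationary_def)
  then obtain C where C: "club kap C" "B \<inter> C = {}"
    by blast
  have tree: "\<exists>T. (\<forall>\<eta>\<in>T. \<forall>m<length \<eta>. \<eta> ! m < lamin i m)
          \<and> [] \<in> T
          \<and> (\<forall>\<eta>\<in>T. \<forall>k\<le>length \<eta>. take k \<eta> \<in> T)
          \<and> (\<forall>\<eta>\<in>T. {\<alpha>. \<alpha> < lamin i (length \<eta>) \<and> \<eta> @ [\<alpha>] \<in> T}
                      \<notin> I (length \<eta>) (lamin i (length \<eta>)))
          \<and> (\<forall>\<eta>\<in>T. \<forall>\<nu>\<in>f \<eta>. seq_vals \<nu> \<subseteq> {..<lami i})"
    if i: "i \<in> C \<inter> S" for i
  proof -
    have "Y \<in> I n (lamin i n)" if "X \<in> I n (lamin i n)" "Y \<subseteq> X" for n X Y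
      using ideal(1)[of i n] i that unfolding ideal_on_def by blast
    moreover have "[] \<notin> ?L i"
      using C(2) i unfolding B_def by blast
    ultimately obtain T where T: "[] \<in> T" "\<forall>\<eta>\<in>T. \<forall>k\<le>length \<eta>. take k \<eta> \<in> T"
        "\<forall>\<eta>\<in>T. admissible i \<eta> \<and> {\<alpha>. \<alpha> < lamin i (length \<eta>) \<and> \<eta> @ [\<alpha>] \<in> T}
                                      \<notin> I (length \<eta>) (lamin i (length \<eta>))"
      using positive_tree_if_root_not_losing[of "\<lambda>n. I n (lamin i n)" "lamin i" "admissible i"]
      by blast
    show ?thesis
      by (rule exI[of _ T], intro conjI T(1,2)) (use T(3) in \<open>auto simp: admissible_def\<close>)
  qed
  show ?thesis
    by (rule exI[of _ C], rule conjI[OF C(1)], rule ballI, erule tree)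
qed

end

theorem claim1p17:
  fixes lam :: "'a::wellorder" and kap :: 'a
    and f :: "'a list \<Rightarrow> 'a omseq set"
    and lami :: "'a \<Rightarrow> 'a" and lamin :: "'a \<Rightarrow> nat \<Rightarrow> 'a"
    and S :: "'a set" and I :: "nat \<Rightarrow> 'a \<Rightarrow> 'a set set"
  assumes sing: "singular_cardinal lam" and kap_def: "kap = cf lam"
    and kap_unc: "\<not> countable {..<kap}"
    and f_ok: "\<forall>\<eta>. set \<eta> \<subseteq> {..<lam} \<longrightarrow>
                 (\<forall>\<nu>\<in>f \<eta>. seq_vals \<nu> \<subseteq> {..<lam}) \<and> f \<eta> \<prec> {..<kap}"
    and lami_card: "\<forall>i<kap. is_cardinal (lami i)"
    and lami_below: "\<forall>i<kap. lami i < lam"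
    and lami_sup: "\<forall>b<lam. \<exists>i<kap. b < lami i"
    and lami_incr: "\<forall>i j. i < j \<and> j < kap \<longrightarrow> lami i < lami j"
    and lami_cont: "\<forall>d<kap. is_limit d \<longrightarrow> (\<forall>b<lami d. \<exists>j<d. b < lami j)"
    and S_sub: "S \<subseteq> {i. i < kap \<and> cf_omega i}"
    and S_stat: "stationary kap S"
    and lamin_sup: "\<forall>i\<in>S. (\<forall>n. lamin i n < lami i) \<and> (\<forall>b<lami i. \<exists>n. b < lamin i n)"
    and lamin_0: "\<forall>i\<in>S. kap < lamin i 0"
    and lamin_reg: "\<forall>i\<in>S. \<forall>n. regular_cardinal (lamin i n)"
    and lamin_incr: "\<forall>i\<in>S. \<forall>n. lamin i n < lamin i (Suc n)"
    and I_ideal: "\<forall>\<mu> n. regular_cardinal \<mu> \<and> \<mu> < lam \<longrightarrow>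
                    ideal_on {..<\<mu>} (I n \<mu>) \<and> succ_complete kap (I n \<mu>)
                    \<and> (\<forall>A. A \<subseteq> {..<\<mu>} \<and> (\<exists>b<\<mu>. A \<subseteq> {..<b}) \<longrightarrow> A \<in> I n \<mu>)"
    and coh: "\<forall>i1\<in>S. \<forall>i2\<in>S. \<forall>n.
                {j. j < kap \<and> lami j < lamin i1 n} = {j. j < kap \<and> lami j < lamin i2 n}
                \<longrightarrow> lamin i1 n = lamin i2 n"
  shows "\<exists>C. club kap C \<and> (\<forall>i\<in>C \<inter> S. \<exists>T :: 'a list set.
            (\<forall>\<eta>\<in>T. \<forall>m<length \<eta>. \<eta> ! m < lamin i m)
          \<and> [] \<in> T
          \<and> (\<forall>\<eta>\<in>T. \<forall>k\<le>length \<eta>. take k \<eta> \<in> T)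
          \<and> (\<forall>\<eta>\<in>T. {\<alpha>. \<alpha> < lamin i (length \<eta>) \<and> \<eta> @ [\<alpha>] \<in> T}
                      \<notin> I (length \<eta>) (lamin i (length \<eta>)))
          \<and> (\<forall>\<eta>\<in>T. \<forall>\<nu>\<in>f \<eta>. seq_vals \<nu> \<subseteq> {..<lami i}))"
proof -
  have "cofinal_map kap lam lami"
    unfolding cofinal_map_def using lami_below lami_sup less_imp_le by blast
  moreover have "mono_on {..<kap} lami"
    unfolding mono_on_def using lami_incr by (auto simp: le_less)
  ultimately have "cf kap = kap"
    using cf_cf_eq kap_def by simp
  moreover have "S \<subseteq> {i. i < kap \<and> is_limit i}"
    using S_sub cf_omega_imp_is_limit by blast
  moreover have "\<forall>i\<in>S. \<forall>n. lamin i n < lami i"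
    using lamin_sup by blast
  moreover have "\<forall>i\<in>S. \<forall>n. ideal_on {..<lamin i n} (I n (lamin i n)) \<and> succ_complete kap (I n (lamin i n))"
  proof (intro ballI allI)
    fix i n assume "i \<in> S"
    then have "lamin i n < lami i" "lami i < lam"
      using lamin_sup lami_below S_sub by auto
    then have "regular_cardinal (lamin i n) \<and> lamin i n < lam"
      using lamin_reg \<open>i \<in> S\<close> by (meson order.strict_trans)
    then show "ideal_on {..<lamin i n} (I n (lamin i n)) \<and> succ_complete kap (I n (lamin i n))"
      using I_ideal by blast
  qed
  ultimately interpret club_tree_setting lam kap f lami lamin S I
    using kap_unc f_ok lami_below lami_sup lami_incr lami_cont S_stat coh by unfold_locales
  show ?thesis
    by (rule club_of_positive_trees)
qed

end
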